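(* For every integer $i\ge 0$, $\lim_{k\to\infty}\overline{\alpha}(\{1,k,k+2i+1\})=\frac{i+1}{2i+3}$.
   Context: For a finite set $S$ of positive integers, the distance graph $G(S)$ has vertex set $\mathbb{Z}$, with $i,j$ adjacent iff $|i-j|\in S$. The density of $A\subseteq\mathbb{Z}$ is $\delta(A)=\limsup_{N\to\infty}\frac{|A\cap[-N,N]|}{2N+1}$, and the independence ratio $\overline{\alpha}(S)$ is the supremum of $\delta(A)$ over independent sets $A$ of $G(S)$. *)

theory Defs
  imports "HOL-Analysis.Analysis" "HOL-Library.Liminf_Limsup"
begin

definition dist_adj :: "nat set \<Rightarrow> int \<Rightarrow> int \<Rightarrow> bool" where
  "dist_adj S i j \<longleftrightarrow> nat \<bar>i - j\<bar> \<in> S \<and> \<bar>i - j\<bar> > 0"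

definition indep_set :: "nat set \<Rightarrow> int set \<Rightarrow> bool" where
  "indep_set S A \<longleftrightarrow> (\<forall>i\<in>A. \<forall>j\<in>A. \<not> dist_adj S i j)"

definition density :: "int set \<Rightarrow> ereal" where
  "density A = limsup (\<lambda>N::nat. ereal (real (card (A \<inter> {-int N..int N})) / real (2*N+1)))"

definition indep_ratio :: "nat set \<Rightarrow> ereal" where
  "indep_ratio S = (SUP A\<in>{A. indep_set S A}. density A)"

end

theory Submission
  imports Defs
begin

text \<open>
  Upper bound: for \<open>m = 2i+1\<close> the \<open>2i+3\<close> integers \<open>x, x+1, \<dots>, x+m, x+m+k\<close> span an odd
  cycle of \<open>G({1, k, k+m})\<close>, so an independent set meets each translate of this pattern in at
  most \<open>i+1\<close> points; averaging over all translates gives density at most \<open>(i+1)/(2i+3)\<close>.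

  Lower bound: for \<open>q = (2i+3)k\<close> and a multiplier \<open>a \<equiv> i+1 (mod 2i+3)\<close> the residues of
  \<open>a\<close>, \<open>ak\<close>, \<open>a(k+m)\<close> modulo \<open>q\<close> all lie in \<open>[r, q-r]\<close> with \<open>r = (i+1)k - O(i\<^sup>2)\<close>.
  Then every set \<open>{x. (ax + c) mod q < r}\<close> is independent, and averaging over \<open>c\<close> shows that
  one of them has density at least \<open>r/q \<rightarrow> (i+1)/(2i+3)\<close>.
\<close>

lemma limsup_ge_if_frequently:
  fixes X :: "nat \<Rightarrow> ereal"
  assumes "\<exists>\<^sub>F N in sequentially. c \<le> X N"
  shows "c \<le> limsup X"
  unfolding limsup_INF_SUP
proof (rule INF_greatest)
  fix n
  obtain N where "N \<ge> n" "c \<le> X N"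
    using assms by (auto simp: frequently_sequentially)
  then show "c \<le> (SUP N\<in>{n..}. X N)" by (auto intro: SUP_upper2)
qed

lemma density_le_if_card_le:
  assumes "\<And>N. real (card (A \<inter> {-int N..int N})) \<le> \<rho> * real (2*N+1) + C"
  shows "density A \<le> ereal \<rho>"
proof -
  have "(\<lambda>N. C / real (Suc (2*N))) \<longlonglongrightarrow> 0"
    using LIMSEQ_subseq_LIMSEQ[OF lim_const_over_n[of C], of "\<lambda>N. Suc (2*N)"]
    by (simp add: strict_mono_Suc_iff o_def)
  from tendsto_add[OF tendsto_const this]
  have "(\<lambda>N. \<rho> + C / real (2*N+1)) \<longlonglongrightarrow> \<rho>" by simp
  then have lim: "(\<lambda>N. ereal (\<rho> + C / real (2*N+1))) \<longlonglongrightarrow> ereal \<rho>"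
    by (rule tendsto_ereal)
  have "real (card (A \<inter> {-int N..int N})) / real (2*N+1) \<le> \<rho> + C / real (2*N+1)" for N
    using assms[of N] by (simp add: divide_simps)
  then have "density A \<le> limsup (\<lambda>N. ereal (\<rho> + C / real (2*N+1)))"
    unfolding density_def by (intro Limsup_mono) auto
  also have "\<dots> = ereal \<rho>"
    using lim by (intro lim_imp_Limsup) simp_all
  finally show ?thesis .
qed

lemma ex_density_ge_average:
  fixes B :: "'c \<Rightarrow> int set"
  assumes "finite C" "C \<noteq> {}"
    and avg: "\<And>N. \<rho> * real (card C) * real (2*N+1) \<le> (\<Sum>c\<in>C. real (card (B c \<inter> {-int N..int N})))"
  shows "\<exists>c\<in>C. ereal \<rho> \<le> density (B c)"
proof -
  define good where "good c N \<longleftrightarrow> \<rho> * real (2*N+1) \<le> real (card (B c \<inter> {-int N..int N}))" for c N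
  have "\<exists>c\<in>C. good c N" for N
  proof (rule ccontr)
    assume "\<not> (\<exists>c\<in>C. good c N)"
    then have "(\<Sum>c\<in>C. real (card (B c \<inter> {-int N..int N}))) < (\<Sum>c\<in>C. \<rho> * real (2*N+1))"
      using assms(1,2) by (intro sum_strict_mono) (auto simp: good_def)
    with avg[of N] show False by (simp add: mult_ac)
  qed
  then have "\<not> (\<forall>\<^sub>F N in sequentially. \<forall>c\<in>C. \<not> good c N)"
    unfolding eventually_sequentially by (meson order_refl)
  then have "\<not> (\<forall>c\<in>C. \<forall>\<^sub>F N in sequentially. \<not> good c N)"
    by (simp add: eventually_ball_finite_distrib[OF assms(1)])
  then obtain c where "c \<in> C" "\<exists>\<^sub>F N in sequentially. good c N"
    by (auto simp: frequently_def)
  moreover from this(2)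
  have "\<exists>\<^sub>F N in sequentially. ereal \<rho> \<le> ereal (real (card (B c \<inter> {-int N..int N})) / real (2*N+1))"
    by (rule frequently_elim1) (simp add: good_def pos_le_divide_eq)
  ultimately show ?thesis
    unfolding density_def by (blast intro: limsup_ge_if_frequently)
qed

lemma sum_le_sum_shift:
  fixes h :: "int \<Rightarrow> nat"
  assumes "\<And>y. h y \<le> 1"
  shows "(\<Sum>x\<in>{a..b}. h x) \<le> (\<Sum>x\<in>{a..b}. h (x + int d)) + d"
proof (induction d)
  case (Suc d)
  have "(\<Sum>x\<in>{a..b}. h (x + int d)) \<le> (\<Sum>x\<in>insert a {a+1..b+1}. h (x + int d))"
    by (rule sum_mono2) auto
  also have "\<dots> \<le> 1 + (\<Sum>x\<in>{a+1..b+1}. h (x + int d))"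
    using assms by (simp add: sum.insert_if)
  also have "(\<Sum>x\<in>{a+1..b+1}. h (x + int d)) = (\<Sum>x\<in>{a..b}. h (x + int (Suc d)))"
    by (rule sum.reindex_bij_witness[of _ "\<lambda>x. x + 1" "\<lambda>x. x - 1"]) (auto simp: add_ac)
  finally show ?case using Suc.IH by simp
qed simp

text \<open>
  Double counting: summing the window bound over the translates \<open>x + D\<close>, \<open>x \<in> [a, b]\<close>, counts
  each point of \<open>A \<inter> [a, b]\<close> once for every offset in \<open>D\<close>, up to boundary losses of at most
  \<open>d\<close> per offset \<open>d\<close>.
\<close>
lemma card_le_by_translates:
  fixes A :: "int set" and D :: "nat set"
  assumes "finite D"
    and window: "\<And>x. (\<Sum>d\<in>D. of_bool (x + int d \<in> A)) \<le> t"
  shows "card D * card (A \<inter> {a..b}) \<le> t * card {a..b} + (\<Sum>d\<in>D. d)"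
proof -
  define g :: "int \<Rightarrow> nat" where "g x = of_bool (x \<in> A)" for x
  have card_eq: "card (A \<inter> {a..b}) = (\<Sum>x\<in>{a..b}. g x)"
    by (simp add: g_def sum_of_bool_eq Int_commute)
  have "card D * card (A \<inter> {a..b}) = (\<Sum>d\<in>D. \<Sum>x\<in>{a..b}. g x)"
    by (simp add: card_eq)
  also have "\<dots> \<le> (\<Sum>d\<in>D. (\<Sum>x\<in>{a..b}. g (x + int d)) + d)"
    by (intro sum_mono sum_le_sum_shift) (simp add: g_def)
  also have "\<dots> = (\<Sum>x\<in>{a..b}. \<Sum>d\<in>D. g (x + int d)) + (\<Sum>d\<in>D. d)"
    by (simp add: sum.distrib sum.swap[of _ D])
  also have "(\<Sum>x\<in>{a..b}. \<Sum>d\<in>D. g (x + int d)) \<le> (\<Sum>x\<in>{a..b}. t)"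
    by (intro sum_mono) (simp add: g_def window)
  finally show ?thesis by (simp add: mult.commute)
qed

text \<open>
  The points \<open>x, x+1, \<dots>, x+m, x+m+k\<close> with \<open>m = 2i+1\<close> form a cycle of length \<open>2i+3\<close>:
  each of its \<open>2i+3\<close> edges carries at most one point of \<open>A\<close>, and each point lies on two edges.
\<close>
lemma indep_set_odd_cycle_count:
  fixes i k :: nat and x :: int
  assumes "k \<ge> 1" "indep_set {1, k, k + 2*i + 1} A"
  shows "(\<Sum>d\<in>insert (2*i+1+k) {..2*i+1}. of_bool (x + int d \<in> A)) \<le> i + 1"
proof -
  define m where "m = 2*i+1"
  define F :: "nat \<Rightarrow> nat" where "F j = of_bool (x + int j \<in> A)" for j
  have edge: "F j + F j' \<le> 1" if "j \<noteq> j'" "nat \<bar>int j - int j'\<bar> \<in> {1, k, k + 2*i + 1}" for j j'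
  proof (rule ccontr)
    assume "\<not> F j + F j' \<le> 1"
    then have "x + int j \<in> A" "x + int j' \<in> A" by (auto simp: F_def of_bool_def split: if_splits)
    with assms(2) have "\<not> dist_adj {1, k, k + 2*i + 1} (x + int j) (x + int j')"
      unfolding indep_set_def by blast
    with that show False by (simp add: dist_adj_def)
  qed
  have path: "(\<Sum>j<m. F j + F (Suc j)) \<le> m"
    using sum_mono[of "{..<m}" "\<lambda>j. F j + F (Suc j)" "\<lambda>_. 1"] edge by simp
  have "(\<Sum>j\<le>m. F j) = (\<Sum>j<m. F j) + F m"
    by (simp add: lessThan_Suc_atMost[symmetric])
  moreover have "(\<Sum>j\<le>m. F j) = F 0 + (\<Sum>j<m. F (Suc j))"
    by (simp add: lessThan_Suc_atMost[symmetric] sum.lessThan_Suc_shift del: sum.lessThan_Suc)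
  ultimately have "2 * ((\<Sum>j\<le>m. F j) + F (m+k))
      = (\<Sum>j<m. F j + F (Suc j)) + (F m + F (m+k)) + (F 0 + F (m+k))"
    by (simp add: sum.distrib)
  also have "\<dots> \<le> m + 2"
  proof -
    have "F m + F (m+k) \<le> 1"
      using assms(1) by (intro edge) auto
    moreover have "F 0 + F (m+k) \<le> 1"
      by (intro edge) (auto simp: m_def)
    ultimately show ?thesis using path by linarith
  qed
  finally have "F (m+k) + (\<Sum>j\<le>m. F j) \<le> i + 1" by (simp add: m_def)
  moreover have "m + k \<notin> {..m}" using assms(1) by simp
  ultimately have "(\<Sum>d\<in>insert (m+k) {..m}. F d) \<le> i + 1" by simp
  then show ?thesis unfolding F_def m_def .
qed

lemma indep_ratio_upper:
  fixes i k :: nat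
  assumes "k \<ge> 1"
  shows "indep_ratio {1, k, k + 2*i + 1} \<le> ereal ((real i + 1) / (2 * real i + 3))"
  unfolding indep_ratio_def
proof (rule SUP_least)
  fix A assume "A \<in> {A. indep_set {1, k, k + 2*i + 1} A}"
  then have indep: "indep_set {1, k, k + 2*i + 1} A" by simp
  define D where "D = insert (2*i+1+k) {..2*i+1}"
  define C where "C = real (\<Sum>d\<in>D. d) / (2 * real i + 3)"
  have card_D: "card D = 2*i+3"
    using assms by (simp add: D_def)
  show "density A \<le> ereal ((real i + 1) / (2 * real i + 3))"
  proof (rule density_le_if_card_le)
    fix N
    have card_window: "card {-int N..int N} = 2*N+1"
      by (simp only: card_atLeastAtMost_int)
    have "card D * card (A \<inter> {-int N..int N}) \<le> (i+1) * card {-int N..int N} + (\<Sum>d\<in>D. d)"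
      using indep_set_odd_cycle_count[OF assms indep]
      by (intro card_le_by_translates) (simp_all add: D_def)
    then have "real ((2*i+3) * card (A \<inter> {-int N..int N})) \<le> real ((i+1) * (2*N+1) + (\<Sum>d\<in>D. d))"
      unfolding card_D card_window of_nat_le_iff .
    then have "real (card (A \<inter> {-int N..int N})) \<le> ((real i + 1) * real (2*N+1) + real (\<Sum>d\<in>D. d)) / (2 * real i + 3)"
      by (simp add: pos_le_divide_eq algebra_simps)
    then show "real (card (A \<inter> {-int N..int N})) \<le> (real i + 1) / (2 * real i + 3) * real (2*N+1) + C"
      unfolding C_def times_divide_eq_left add_divide_distrib[of "(real i + 1) * _"] .
  qed
qed

lemma indep_set_mod_interval:
  fixes q r a c :: int
  assumes "0 < q"
    and spread: "\<And>n. n \<in> S \<Longrightarrow> 0 < n \<Longrightarrow> r \<le> (a * int n) mod q \<and> (a * int n) mod q \<le> q - r"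
  shows "indep_set S {x. (a*x + c) mod q < r}"
proof -
  have far: "r \<le> (a*(x + int n) + c) mod q"
    if "n \<in> S" "0 < n" "(a*x + c) mod q < r" for x n
  proof -
    have "(a*(x + int n) + c) mod q = ((a*x + c) mod q + (a * int n) mod q) mod q"
      by (simp add: mod_add_eq algebra_simps)
    also have "\<dots> = (a*x + c) mod q + (a * int n) mod q"
      using spread[OF that(1,2)] that(3) assms(1) by (intro mod_pos_pos_trivial) auto
    finally show ?thesis
      using spread[OF that(1,2)] pos_mod_sign[OF assms(1), of "a*x + c"] by linarith
  qed
  show ?thesis
    unfolding indep_set_def dist_adj_def
  proof (intro ballI notI)
    fix x y assume "x \<in> {x. (a*x + c) mod q < r}" "y \<in> {x. (a*x + c) mod q < r}"
      and "nat \<bar>x - y\<bar> \<in> S \<and> 0 < \<bar>x - y\<bar>"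
    moreover have "y = x + int (nat \<bar>x - y\<bar>) \<or> x = y + int (nat \<bar>x - y\<bar>)" by auto
    ultimately show False
      using far[of "nat \<bar>x - y\<bar>" x] far[of "nat \<bar>x - y\<bar>" y] by auto
  qed
qed

lemma card_mod_interval:
  fixes q r b :: int
  assumes "0 \<le> r" "r \<le> q"
  shows "card {c\<in>{0..<q}. (b + c) mod q < r} = nat r"
proof -
  have "{c\<in>{0..<q}. (b + c) mod q < r} = (\<lambda>y. (y - b) mod q) ` {0..<r}"
  proof (rule set_eqI, rule iffI)
    fix c assume c: "c \<in> {c\<in>{0..<q}. (b + c) mod q < r}"
    then have "c = ((b + c) mod q - b) mod q"
      by (simp add: mod_diff_left_eq mod_pos_pos_trivial)
    with c show "c \<in> (\<lambda>y. (y - b) mod q) ` {0..<r}" by auto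
  next
    fix c assume "c \<in> (\<lambda>y. (y - b) mod q) ` {0..<r}"
    then obtain y where "0 \<le> y" "y < r" "c = (y - b) mod q" by auto
    with assms show "c \<in> {c\<in>{0..<q}. (b + c) mod q < r}"
      by (simp add: mod_add_right_eq mod_pos_pos_trivial)
  qed
  moreover have "inj_on (\<lambda>y. (y - b) mod q) {0..<r}"
  proof (rule inj_onI)
    fix y z assume "y \<in> {0..<r}" "z \<in> {0..<r}" "(y - b) mod q = (z - b) mod q"
    then have "y mod q = z mod q" by (metis diff_add_cancel mod_add_left_eq)
    with \<open>y \<in> {0..<r}\<close> \<open>z \<in> {0..<r}\<close> assms show "y = z" by (simp add: mod_pos_pos_trivial)
  qed
  ultimately show ?thesis by (simp add: card_image)
qed

lemma sum_card_mod_interval: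
  fixes q r a :: int and W :: "int set"
  assumes "finite W" "0 \<le> r" "r \<le> q"
  shows "(\<Sum>c\<in>{0..<q}. card ({x. (a*x + c) mod q < r} \<inter> W)) = card W * nat r"
proof -
  have "(\<Sum>c\<in>{0..<q}. card ({x. (a*x + c) mod q < r} \<inter> W))
      = (\<Sum>c\<in>{0..<q}. \<Sum>x\<in>W. (of_bool ((a*x + c) mod q < r) :: nat))"
    using assms(1) by (simp add: sum_of_bool_eq Int_commute)
  also have "\<dots> = (\<Sum>x\<in>W. \<Sum>c\<in>{0..<q}. (of_bool ((a*x + c) mod q < r) :: nat))"
    by (rule sum.swap)
  also have "\<dots> = (\<Sum>x\<in>W. nat r)"
    using card_mod_interval[OF assms(2,3)] by (simp add: sum_of_bool_eq Int_def conj_commute)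
  finally show ?thesis by simp
qed

text \<open>The sets \<open>{x. (a x + c) mod q < r}\<close> have density exactly \<open>r/q\<close>; averaging over \<open>c\<close> suffices.\<close>
lemma indep_ratio_ge_mod_interval:
  fixes q r a :: int
  assumes "0 < q" "0 \<le> r" "r \<le> q"
    and spread: "\<And>n. n \<in> S \<Longrightarrow> 0 < n \<Longrightarrow> r \<le> (a * int n) mod q \<and> (a * int n) mod q \<le> q - r"
  shows "ereal (real_of_int r / real_of_int q) \<le> indep_ratio S"
proof -
  have "\<exists>c\<in>{0..<q}. ereal (real_of_int r / real_of_int q) \<le> density {x. (a*x + c) mod q < r}"
  proof (rule ex_density_ge_average)
    fix N
    have "card {-int N..int N} = 2*N+1"
      by (simp only: card_atLeastAtMost_int)
    then show "real_of_int r / real_of_int q * real (card {0..<q}) * real (2*N+1)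
        \<le> (\<Sum>c\<in>{0..<q}. real (card ({x. (a*x + c) mod q < r} \<inter> {-int N..int N})))"
      using sum_card_mod_interval[OF _ assms(2,3), of "{-int N..int N}" a] assms(1,2)
      by (simp add: algebra_simps flip: of_nat_sum)
  qed (use assms(1) in auto)
  then obtain c where "ereal (real_of_int r / real_of_int q) \<le> density {x. (a*x + c) mod q < r}"
    by blast
  also have "\<dots> \<le> indep_ratio S"
    unfolding indep_ratio_def
    by (rule SUP_upper) (simp add: indep_set_mod_interval[OF assms(1) spread])
  finally show ?thesis .
qed

lemma multiplier_residues:
  fixes I K a s t :: int
  assumes "0 \<le> I" "0 \<le> s" "(2*I+1) * s < K"
    and a_eq: "a = (I+1)*K + s" and a_cong: "a = I+1 + (2*I+3)*t"
  defines "q \<equiv> (2*I+3)*K"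
  shows "a mod q = a"
    and "(a*K) mod q = (I+1)*K"
    and "(a*(K + 2*I+1)) mod q = (I+2)*K + (2*I+1) * s"
proof -
  have "s \<le> (2*I+1) * s"
    using mult_nonneg_nonneg[OF assms(1,2)] by (simp add: algebra_simps)
  then have "s < K" using assms(3) by linarith
  then have X: "0 \<le> (I+1)*K" "K \<le> (I+1)*K"
    using assms(1,2) by simp_all
  have q_eq: "q = (I+1)*K + (I+1)*K + K"
    by (simp add: q_def algebra_simps)
  show "a mod q = a"
    unfolding a_eq using assms(2) \<open>s < K\<close> X q_eq by (intro mod_pos_pos_trivial) linarith+
  have aK: "a*K = (I+1)*K + t*q"
    by (simp add: a_cong q_def algebra_simps)
  then show "(a*K) mod q = (I+1)*K"
    unfolding aK mod_mult_self1 using X q_eq \<open>s < K\<close> assms(2) by (intro mod_pos_pos_trivial) linarith+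
  have "a*(2*I+1) = K + (2*I+1) * s + I*q"
    by (simp add: a_eq q_def algebra_simps)
  then have aKm: "a*(K + 2*I+1) = (I+2)*K + (2*I+1) * s + (t + I)*q"
    using aK by (simp add: distrib_left distrib_right)
  have "0 \<le> (2*I+1) * s" "(I+2)*K = (I+1)*K + K"
    using assms(1,2) by (simp_all add: algebra_simps)
  then show "(a*(K + 2*I+1)) mod q = (I+2)*K + (2*I+1) * s"
    unfolding aKm mod_mult_self1 using assms(3) X q_eq by (intro mod_pos_pos_trivial) linarith+
qed

text \<open>
  A multiplier \<open>a \<equiv> I+1 (mod 2I+3)\<close> of size about \<open>(I+1)K\<close> sends \<open>1\<close>, \<open>K\<close> and \<open>K+2I+1\<close>
  to residues about \<open>(I+1)K\<close>, \<open>(I+1)K\<close> and \<open>(I+2)K\<close> modulo \<open>(2I+3)K\<close>, all far from \<open>0\<close>.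
\<close>
lemma ex_spreading_multiplier:
  fixes I K :: int
  assumes "0 \<le> I" "(2*I+1)*(2*I+3) \<le> K"
  defines "q \<equiv> (2*I+3)*K" and "r \<equiv> (I+1)*K - (2*I+1)*(2*I+2)"
  obtains a where "\<And>n. n \<in> {1, K, K + 2*I + 1} \<Longrightarrow> r \<le> (a*n) mod q \<and> (a*n) mod q \<le> q - r"
proof -
  define m where "m = 2*I+1"
  define s where "s = ((I+1)*(1-K)) mod (2*I+3)"
  define t where "t = - (((I+1)*(1-K)) div (2*I+3))"
  define a where "a = (I+1)*K + s"
  have "0 < 2*I+3" using assms(1) by simp
  then have "0 \<le> s" "s < 2*I+3"
    by (simp_all add: s_def)
  then have "s \<le> m + 1" by (simp add: m_def)
  have "a = I+1 + (2*I+3)*t"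
    using div_mult_mod_eq[of "(I+1)*(1-K)" "2*I+3"] by (simp add: a_def s_def t_def algebra_simps)
  have m_nonneg: "0 \<le> m" using assms(1) by (simp add: m_def)
  have ms_le: "m * s \<le> m * (m+1)"
    using \<open>s \<le> m + 1\<close> m_nonneg by (rule mult_left_mono)
  also have "m * (m+1) < K"
    using assms by (simp add: m_def algebra_simps)
  finally have "m * s < K" .
  then have residues: "a mod q = a" "(a*K) mod q = (I+1)*K" "(a*(K+m)) mod q = (I+2)*K + m * s"
    using multiplier_residues[OF assms(1) \<open>0 \<le> s\<close> _ a_def \<open>a = I+1 + (2*I+3)*t\<close>]
    by (simp_all add: q_def m_def add.assoc)
  have "s \<le> m * s"
    using mult_nonneg_nonneg[OF assms(1) \<open>0 \<le> s\<close>] by (simp add: m_def algebra_simps)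
  then have "s < K" using ms_le \<open>m * (m+1) < K\<close> by linarith
  then have bounds: "0 \<le> m * s" "0 \<le> m*(m+1)" "0 \<le> (I+1)*K"
    "q = (I+1)*K + (I+2)*K" "(I+2)*K = (I+1)*K + K" "r = (I+1)*K - m*(m+1)"
    using assms(1) m_nonneg \<open>0 \<le> s\<close> by (simp_all add: q_def r_def m_def algebra_simps)
  show ?thesis
  proof (rule that[of a])
    fix n assume "n \<in> {1, K, K + 2*I + 1}"
    then consider "n = 1" | "n = K" | "n = K + m" by (auto simp: m_def)
    then show "r \<le> (a*n) mod q \<and> (a*n) mod q \<le> q - r"
    proof cases
      case 1
      show ?thesis
        unfolding 1 mult_1_right residues(1) using a_def bounds \<open>s < K\<close> \<open>0 \<le> s\<close> by linarith
    next
      case 2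
      show ?thesis
        unfolding 2 residues(2) using bounds \<open>s < K\<close> \<open>0 \<le> s\<close> by linarith
    next
      case 3
      show ?thesis
        unfolding 3 residues(3) using bounds ms_le \<open>s < K\<close> \<open>0 \<le> s\<close> by linarith
    qed
  qed
qed

lemma indep_ratio_lower:
  fixes i k :: nat
  assumes "(2*i+1)*(2*i+3) \<le> k"
  shows "ereal ((real i + 1) / (2 * real i + 3) - (2*real i+1)*(2*real i+2) / ((2*real i+3) * real k))
           \<le> indep_ratio {1, k, k + 2*i + 1}"
proof -
  define q where "q = (2*int i+3) * int k"
  define r where "r = (int i+1) * int k - (2*int i+1)*(2*int i+2)"
  have "int ((2*i+1)*(2*i+3)) \<le> int k"
    using assms by (simp only: of_nat_le_iff)
  then have "(2*int i+1)*(2*int i+3) \<le> int k" by (simp add: algebra_simps)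
  then obtain a where spread: "\<And>n. n \<in> {1, int k, int k + 2*int i + 1} \<Longrightarrow> r \<le> (a*n) mod q \<and> (a*n) mod q \<le> q - r"
    using ex_spreading_multiplier[of "int i" "int k"] unfolding q_def r_def by auto
  have k_pos: "0 < k"
    using assms by (simp add: leD)
  have "0 < q"
    using k_pos by (simp add: q_def)
  moreover have "0 \<le> r"
  proof -
    have "(2*int i+1)*(2*int i+2) \<le> (2*int i+1)*(2*int i+3)"
      by (intro mult_left_mono) simp_all
    also have "\<dots> \<le> int k" by fact
    also have "\<dots> \<le> (int i+1) * int k" by (simp add: distrib_right)
    finally show ?thesis by (simp add: r_def)
  qed
  moreover have "r \<le> q"
    using spread[of 1] \<open>0 \<le> r\<close> by simp
  ultimately have "ereal (real_of_int r / real_of_int q) \<le> indep_ratio {1, k, k + 2*i + 1}"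
  proof (rule indep_ratio_ge_mod_interval)
    fix n assume "n \<in> {1, k, k + 2*i + 1}"
    then show "r \<le> (a * int n) mod q \<and> (a * int n) mod q \<le> q - r"
      by (intro spread) auto
  qed
  moreover have "real_of_int r / real_of_int q
      = (real i + 1) / (2 * real i + 3) - (2*real i+1)*(2*real i+2) / ((2*real i+3) * real k)"
  proof -
    have "real_of_int r / real_of_int q
        = (real i + 1) * real k / ((2 * real i + 3) * real k) - (2*real i+1)*(2*real i+2) / ((2*real i+3) * real k)"
      by (simp add: r_def q_def diff_divide_distrib)
    then show ?thesis
      using k_pos by simp
  qed
  ultimately show ?thesis by simp
qed

theorem theorem25:
  fixes i :: nat
  shows "(\<lambda>k::nat. indep_ratio {1, k, k + 2*i + 1})
           \<longlonglongrightarrow> ereal ((real i + 1) / (2 * real i + 3))"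
proof (rule tendsto_sandwich)
  define L where "L = (real i + 1) / (2 * real i + 3)"
  define c where "c = (2*real i+1)*(2*real i+2) / (2*real i+3)"
  have "(\<lambda>k. L - c / real k) \<longlonglongrightarrow> L - 0"
    by (intro tendsto_intros)
  then show "(\<lambda>k. ereal (L - c / real k)) \<longlonglongrightarrow> ereal L"
    by (intro tendsto_ereal) simp
  show "\<forall>\<^sub>F k in sequentially. ereal (L - c / real k) \<le> indep_ratio {1, k, k + 2*i + 1}"
    using eventually_ge_at_top[of "(2*i+1)*(2*i+3)"]
    by eventually_elim (use indep_ratio_lower in \<open>simp add: L_def c_def\<close>)
  show "\<forall>\<^sub>F k in sequentially. indep_ratio {1, k, k + 2*i + 1} \<le> ereal L"
    using eventually_ge_at_top[of 1]
    by eventually_elim (use indep_ratio_upper in \<open>simp add: L_def\<close>)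
  show "(\<lambda>k. ereal L) \<longlonglongrightarrow> ereal ((real i + 1) / (2 * real i + 3))"
    by (simp add: L_def)
qed

end
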